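(* Let $x\in W_n$ and $1\le i\le n-2$. Then $x\in\mathcal{D}_i(W_n)$ if and only if $tx\in\mathcal{D}_i(W_n)$; and if this is the case, then $\gamma_i(tx)=t\gamma_i(x)$.
   Context: $W_n$ is the Weyl group of type $B_n$ with Coxeter generators $t,s_1,\dots,s_{n-1}$ ($(ts_1)^4=1$, $(s_is_{i+1})^3=1$, other distinct pairs commute), $\ell$ its length function. For $1\le i\le n-2$ and $x\in W_n$, let $\mathcal{R}_i(x)=\{s\in\{s_i,s_{i+1}\}:\ell(xs)<\ell(x)\}$ and let $\mathcal{D}_i(W_n)$ be the set of $x\in W_n$ with $|\mathcal{R}_i(x)|=1$. For $x\in\mathcal{D}_i(W_n)$ the set $\{xs_i,xs_{i+1}\}\cap\mathcal{D}_i(W_n)$ is a singleton, whose element is denoted $\gamma_i(x)$ (the Kazhdan–Lusztig star operation). *)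

theory Defs
  imports Main
begin

text \<open>Weyl group of type B_n realised as the group of signed permutations of
  {-n..n}-{0}, as maps int => int. Elements are products of the Coxeter generators
  t (sign change of 1) and s_i (swap i,i+1 and -i,-(i+1)); the product xy is
  composition x o y (so xs = x o s, tx = t o x).\<close>

definition tB :: "int \<Rightarrow> int" where
  "tB k = (if k = 1 then -1 else if k = -1 then 1 else k)"

definition sB :: "nat \<Rightarrow> int \<Rightarrow> int" where
  "sB i k = (if k = int i then int i + 1 else if k = int i + 1 then int i
             else if k = - int i then - int i - 1 else if k = - int i - 1 then - int i
             else k)"

definition gensB :: "nat \<Rightarrow> (int \<Rightarrow> int) set" where
  "gensB n = insert tB {sB i | i. 1 \<le> i \<and> i \<le> n - 1}"

definition prodw :: "(int \<Rightarrow> int) list \<Rightarrow> int \<Rightarrow> int" where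
  "prodw ws = foldr (\<circ>) ws id"

definition WB :: "nat \<Rightarrow> (int \<Rightarrow> int) set" where
  "WB n = {prodw ws | ws. set ws \<subseteq> gensB n}"

definition lenB :: "nat \<Rightarrow> (int \<Rightarrow> int) \<Rightarrow> nat" where
  "lenB n x = (LEAST k. \<exists>ws. length ws = k \<and> set ws \<subseteq> gensB n \<and> prodw ws = x)"

definition RB :: "nat \<Rightarrow> nat \<Rightarrow> (int \<Rightarrow> int) \<Rightarrow> (int \<Rightarrow> int) set" where
  "RB n i x = {s \<in> {sB i, sB (i + 1)}. lenB n (x \<circ> s) < lenB n x}"

definition DB :: "nat \<Rightarrow> nat \<Rightarrow> (int \<Rightarrow> int) set" where
  "DB n i = {x \<in> WB n. card (RB n i x) = 1}"

definition gammaB :: "nat \<Rightarrow> nat \<Rightarrow> (int \<Rightarrow> int) \<Rightarrow> (int \<Rightarrow> int)" where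
  "gammaB n i x = (THE y. y \<in> {x \<circ> sB i, x \<circ> sB (i + 1)} \<inter> DB n i)"

end

theory Submission
  imports Defs "HOL-Combinatorics.Transposition"
begin

text \<open>Elements of \<open>WB n\<close> are signed permutations, and the Coxeter length of \<open>x\<close> is half of
  \<open>double_length n x\<close>: the number of inversions of \<open>x\<close> on \<open>\<plusminus>[n]\<close> plus the number of
  \<open>a \<in> [n]\<close> with \<open>x a < 0\<close>. Consequently \<open>x \<circ> s\<^sub>j\<close> is shorter than \<open>x\<close> iff
  \<open>x (j + 1) < x j\<close>, so membership of \<open>x\<close> in \<open>DB n i\<close> only depends on the relative order of
  \<open>x i, x (i + 1), x (i + 2)\<close>. These three values have distinct nonzero absolute values, and
  \<open>t\<close>, which only exchanges \<open>1\<close> and \<open>-1\<close>, preserves the order of any two such numbers.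
  Hence \<open>DB n i\<close> is stable under \<open>x \<mapsto> t x\<close>, and since \<open>(t x) s = t (x s)\<close>, the star
  operation \<open>\<gamma>\<^sub>i\<close> commutes with it.\<close>

lemma int_card_eq_card_Diff_singleton:
  assumes "finite A"
  shows "int (card A) = int (card (A - {a})) + of_bool (a \<in> A)"
  using card_Suc_Diff1[OF assms, of a] by (cases "a \<in> A") auto

definition inversions :: "'a::linorder set \<Rightarrow> ('a \<Rightarrow> 'b::linorder) \<Rightarrow> ('a \<times> 'a) set" where
  "inversions D x = {(a, b). a \<in> D \<and> b \<in> D \<and> a < b \<and> x b < x a}"

lemma finite_inversions: "finite D \<Longrightarrow> finite (inversions D x)"
  by (rule finite_subset[of _ "D \<times> D"]) (auto simp: inversions_def)

lemma inversions_comp_transpose_subset: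
  assumes "p \<in> D" "q \<in> D" "p < q" "\<forall>c\<in>D. \<not> (p < c \<and> c < q)"
  shows "map_prod (transpose p q) (transpose p q) ` (inversions D x - {(p, q)})
           \<subseteq> inversions D (x \<circ> transpose p q) - {(p, q)}"
proof
  fix z assume "z \<in> map_prod (transpose p q) (transpose p q) ` (inversions D x - {(p, q)})"
  then obtain a b where z: "z = (transpose p q a, transpose p q b)"
    and ab: "a \<in> D" "b \<in> D" "a < b" "x b < x a" "(a, b) \<noteq> (p, q)"
    by (auto simp: inversions_def)
  from ab assms have "(transpose p q a, transpose p q b) \<in> inversions D (x \<circ> transpose p q)"
    unfolding inversions_def transpose_def by auto
  moreover from ab(3,5) assms(3) have "(transpose p q a, transpose p q b) \<noteq> (p, q)"
    by (auto simp: transpose_eq_iff)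
  ultimately show "z \<in> inversions D (x \<circ> transpose p q) - {(p, q)}"
    by (simp add: z)
qed

lemma card_inversions_comp_transpose:
  assumes "finite D" "p \<in> D" "q \<in> D" "p < q" "\<forall>c\<in>D. \<not> (p < c \<and> c < q)" "x p \<noteq> x q"
  shows "int (card (inversions D (x \<circ> transpose p q)))
           = int (card (inversions D x)) + (if x p < x q then 1 else -1)"
proof -
  let ?\<tau> = "transpose p q" and ?f = "map_prod (transpose p q) (transpose p q)"
  have "inj_on ?f A" for A
    by (rule inj_onI) (auto simp: transpose_eq_iff)
  then have card_le: "card (inversions D y - {(p, q)}) \<le> card (inversions D (y \<circ> ?\<tau>) - {(p, q)})"
    for y :: "'a \<Rightarrow> 'b"
    by (metis card_image card_mono finite_Diff finite_inversions[OF assms(1)]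
        inversions_comp_transpose_subset[OF assms(2-5)])
  have rest: "card (inversions D (x \<circ> ?\<tau>) - {(p, q)}) = card (inversions D x - {(p, q)})"
    using card_le[of x] card_le[of "x \<circ> ?\<tau>"] by (simp add: comp_assoc)
  have pq_x: "(p, q) \<in> inversions D x \<longleftrightarrow> x q < x p"
    and pq_x\<tau>: "(p, q) \<in> inversions D (x \<circ> ?\<tau>) \<longleftrightarrow> x p < x q"
    using assms(2-4) by (auto simp: inversions_def)
  show ?thesis
    using rest pq_x pq_x\<tau> assms(6)
      int_card_eq_card_Diff_singleton[OF finite_inversions[OF assms(1)], of x "(p, q)"]
      int_card_eq_card_Diff_singleton[OF finite_inversions[OF assms(1)], of "x \<circ> ?\<tau>" "(p, q)"]
    by auto
qed

definition signed_perm :: "nat \<Rightarrow> (int \<Rightarrow> int) \<Rightarrow> bool" where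
  "signed_perm n x \<longleftrightarrow> inj x \<and> (\<forall>k. x (- k) = - x k) \<and> (\<forall>k. k = 0 \<or> int n < \<bar>k\<bar> \<longrightarrow> x k = k)
     \<and> (\<forall>k. 1 \<le> \<bar>k\<bar> \<and> \<bar>k\<bar> \<le> int n \<longrightarrow> 1 \<le> \<bar>x k\<bar> \<and> \<bar>x k\<bar> \<le> int n)"

definition signed_interval :: "nat \<Rightarrow> int set" where
  "signed_interval n = {- int n..int n} - {0}"

definition neg_positions :: "nat \<Rightarrow> (int \<Rightarrow> int) \<Rightarrow> int set" where
  "neg_positions n x = {a. 1 \<le> a \<and> a \<le> int n \<and> x a < 0}"

definition double_length :: "nat \<Rightarrow> (int \<Rightarrow> int) \<Rightarrow> nat" where
  "double_length n x = card (inversions (signed_interval n) x) + card (neg_positions n x)"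

lemma finite_signed_interval: "finite (signed_interval n)"
  by (simp add: signed_interval_def)

lemma finite_neg_positions: "finite (neg_positions n x)"
  by (rule finite_subset[of _ "{1..int n}"]) (auto simp: neg_positions_def)

lemma signed_perm_id: "signed_perm n id"
  by (simp add: signed_perm_def)

lemma signed_perm_comp:
  assumes "signed_perm n x" "signed_perm n y"
  shows "signed_perm n (x \<circ> y)"
proof -
  have "inj x" "\<And>k. x (- k) = - x k" "\<And>k. k = 0 \<or> int n < \<bar>k\<bar> \<Longrightarrow> x k = k"
    "\<And>k. 1 \<le> \<bar>k\<bar> \<Longrightarrow> \<bar>k\<bar> \<le> int n \<Longrightarrow> 1 \<le> \<bar>x k\<bar> \<and> \<bar>x k\<bar> \<le> int n"
    "inj y" "\<And>k. y (- k) = - y k" "\<And>k. k = 0 \<or> int n < \<bar>k\<bar> \<Longrightarrow> y k = k"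
    "\<And>k. 1 \<le> \<bar>k\<bar> \<Longrightarrow> \<bar>k\<bar> \<le> int n \<Longrightarrow> 1 \<le> \<bar>y k\<bar> \<and> \<bar>y k\<bar> \<le> int n"
    using assms unfolding signed_perm_def by blast+
  then show ?thesis
    unfolding signed_perm_def by (auto intro: inj_compose)
qed

lemma signed_perm_neq:
  assumes "signed_perm n x" "k \<noteq> l" "k \<noteq> - l"
  shows "x k \<noteq> x l" "x k \<noteq> - x l"
  using assms unfolding signed_perm_def by (metis inj_eq)+

lemma double_length_id: "double_length n id = 0"
proof -
  have "inversions (signed_interval n) id = {}" "neg_positions n id = {}"
    by (auto simp: inversions_def neg_positions_def)
  then show ?thesis
    by (simp add: double_length_def)
qed

lemma tB_tB [simp]: "tB (tB k) = k"
  by (simp add: tB_def)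

lemma sB_sB [simp]: "1 \<le> j \<Longrightarrow> sB j (sB j k) = k"
  by (auto simp: sB_def)

lemma tB_eq_transpose: "tB = transpose (- 1) 1"
  by (auto simp: tB_def transpose_def)

lemma sB_eq_transposes:
  "1 \<le> j \<Longrightarrow> sB j = transpose (int j) (int j + 1) \<circ> transpose (- int j - 1) (- int j)"
  by (rule ext) (simp add: sB_def transpose_def)

lemma signed_perm_tB: "1 \<le> n \<Longrightarrow> signed_perm n tB"
  unfolding signed_perm_def by (auto simp: tB_def intro!: injI) (auto split: if_splits)

lemma signed_perm_sB: "1 \<le> j \<Longrightarrow> j + 1 \<le> n \<Longrightarrow> signed_perm n (sB j)"
  unfolding signed_perm_def by (auto simp: sB_def intro!: injI) (auto split: if_splits)

lemma tB_in_gensB: "tB \<in> gensB n"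
  by (simp add: gensB_def)

lemma sB_in_gensB: "1 \<le> j \<Longrightarrow> j + 1 \<le> n \<Longrightarrow> sB j \<in> gensB n"
  by (auto simp: gensB_def)

lemma gensB_cases:
  assumes "g \<in> gensB n"
  obtains "g = tB" | j where "1 \<le> j" "j + 1 \<le> n" "g = sB j"
  using assms unfolding gensB_def by force

lemma signed_perm_gen: "g \<in> gensB n \<Longrightarrow> 1 \<le> n \<Longrightarrow> signed_perm n g"
  by (erule gensB_cases) (auto intro: signed_perm_tB signed_perm_sB)

lemma gen_comp_self: "g \<in> gensB n \<Longrightarrow> g \<circ> g = id"
  by (erule gensB_cases) (auto intro!: ext)

lemma card_neg_positions_comp_involution:
  assumes inv: "\<And>k. s (s k) = k" and bounded: "\<And>k. 1 \<le> k \<Longrightarrow> k \<le> int n \<Longrightarrow> 1 \<le> s k \<and> s k \<le> int n"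
  shows "card (neg_positions n (x \<circ> s)) = card (neg_positions n x)"
proof -
  have "bij_betw s (neg_positions n (x \<circ> s)) (neg_positions n x)"
    by (rule bij_betw_byWitness[of _ s]) (use inv bounded in \<open>auto simp: neg_positions_def\<close>)
  then show ?thesis
    by (rule bij_betw_same_card)
qed

lemma double_length_comp_sB:
  assumes x: "signed_perm n x" and j: "1 \<le> j" "j + 1 \<le> n"
  shows "int (double_length n (x \<circ> sB j))
           = int (double_length n x) + (if x (int j) < x (int j + 1) then 2 else -2)"
proof -
  txt \<open>On \<open>\<plusminus>[n]\<close>, \<open>s\<^sub>j\<close> is the product of two adjacent transpositions; since \<open>x\<close> is odd,
    both change the number of inversions in the same direction.\<close>
  let ?y = "x \<circ> transpose (int j) (int j + 1)"
  have odd: "\<And>k. x (- k) = - x k"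
    using x by (simp add: signed_perm_def)
  have ne: "x (int j) \<noteq> x (int j + 1)"
    using signed_perm_neq(1)[OF x, of "int j" "int j + 1"] j by simp
  have y: "?y (- int j - 1) = - x (int j + 1)" "?y (- int j) = - x (int j)"
    using j odd[of "int j + 1"] odd[of "int j"] by (auto simp: transpose_def)
  have inv1: "int (card (inversions (signed_interval n) ?y))
      = int (card (inversions (signed_interval n) x)) + (if x (int j) < x (int j + 1) then 1 else -1)"
    using j ne by (intro card_inversions_comp_transpose) (auto simp: signed_interval_def finite_signed_interval)
  have inv2: "int (card (inversions (signed_interval n) (?y \<circ> transpose (- int j - 1) (- int j))))
      = int (card (inversions (signed_interval n) ?y)) + (if x (int j) < x (int j + 1) then 1 else -1)"
    using j ne y by (subst card_inversions_comp_transpose) (auto simp: signed_interval_def finite_signed_interval)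
  have neg: "card (neg_positions n (x \<circ> sB j)) = card (neg_positions n x)"
    by (rule card_neg_positions_comp_involution) (use j in \<open>auto simp: sB_def\<close>)
  show ?thesis
    using inv1 inv2 neg sB_eq_transposes[OF j(1)] by (simp add: double_length_def comp_assoc)
qed

lemma double_length_comp_tB:
  assumes x: "signed_perm n x" and n: "1 \<le> n"
  shows "int (double_length n (x \<circ> tB)) = int (double_length n x) + (if 0 < x 1 then 2 else -2)"
proof -
  have x_neg1: "x (- 1) = - x 1"
    using x by (simp add: signed_perm_def)
  have x1: "x 1 \<noteq> 0"
    using signed_perm_neq(1)[OF x, of 1 0] x by (simp add: signed_perm_def)
  have inv: "int (card (inversions (signed_interval n) (x \<circ> tB)))
      = int (card (inversions (signed_interval n) x)) + (if 0 < x 1 then 1 else -1)"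
    unfolding tB_eq_transpose using n x_neg1 x1
    by (subst card_inversions_comp_transpose) (auto simp: signed_interval_def finite_signed_interval)
  have "neg_positions n (x \<circ> tB) - {1} = neg_positions n x - {1}"
    and "1 \<in> neg_positions n (x \<circ> tB) \<longleftrightarrow> 0 < x 1"
    and "1 \<in> neg_positions n x \<longleftrightarrow> x 1 < 0"
    using n x_neg1 by (auto simp: neg_positions_def tB_def)
  then have neg: "int (card (neg_positions n (x \<circ> tB))) = int (card (neg_positions n x)) + (if 0 < x 1 then 1 else -1)"
    using x1 int_card_eq_card_Diff_singleton[OF finite_neg_positions, of n x 1]
      int_card_eq_card_Diff_singleton[OF finite_neg_positions, of n "x \<circ> tB" 1]
    by auto
  show ?thesis
    using inv neg by (simp add: double_length_def)
qed

lemma double_length_comp_gen_le: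
  assumes "signed_perm n x" "g \<in> gensB n" "1 \<le> n"
  shows "double_length n (x \<circ> g) \<le> double_length n x + 2"
proof -
  from assms(2) have "int (double_length n (x \<circ> g)) \<le> int (double_length n x) + 2"
  proof (cases rule: gensB_cases)
    case 1
    then show ?thesis using double_length_comp_tB[OF assms(1,3)] by simp
  next
    case (2 j)
    then show ?thesis using double_length_comp_sB[OF assms(1) 2(1,2)] by simp
  qed
  then show ?thesis by linarith
qed

lemma prodw_Nil: "prodw [] = id"
  by (simp add: prodw_def)

lemma prodw_snoc: "prodw (ws @ [g]) = prodw ws \<circ> g"
proof -
  have "foldr (\<circ>) ws h = foldr (\<circ>) ws id \<circ> h" for h :: "int \<Rightarrow> int"
    by (induction ws) (simp_all add: comp_assoc)
  from this[of g] show ?thesis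
    by (simp add: prodw_def)
qed

lemma signed_perm_prodw: "set ws \<subseteq> gensB n \<Longrightarrow> 1 \<le> n \<Longrightarrow> signed_perm n (prodw ws)"
  by (induction ws rule: rev_induct)
    (simp_all add: prodw_Nil prodw_snoc signed_perm_id signed_perm_comp signed_perm_gen)

lemma double_length_prodw_le:
  "set ws \<subseteq> gensB n \<Longrightarrow> 1 \<le> n \<Longrightarrow> double_length n (prodw ws) \<le> 2 * length ws"
proof (induction ws rule: rev_induct)
  case Nil
  show ?case
    unfolding prodw_Nil double_length_id by simp
next
  case (snoc g ws)
  then have "double_length n (prodw ws \<circ> g) \<le> double_length n (prodw ws) + 2"
    by (intro double_length_comp_gen_le signed_perm_prodw) auto
  moreover have "double_length n (prodw ws) \<le> 2 * length ws"
    using snoc by simp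
  ultimately show ?case
    unfolding prodw_snoc length_append_singleton mult_Suc_right by linarith
qed

lemma signed_perm_ascending_eq_id:
  assumes x: "signed_perm n x" and "0 < x 1"
    and asc: "\<And>j. 1 \<le> j \<Longrightarrow> j + 1 \<le> n \<Longrightarrow> x (int j) < x (int j + 1)"
  shows "x = id"
proof -
  have odd: "\<And>k. x (- k) = - x k" and fixed: "\<And>k. k = 0 \<or> int n < \<bar>k\<bar> \<Longrightarrow> x k = k"
    and bounded: "\<And>k. 1 \<le> \<bar>k\<bar> \<Longrightarrow> \<bar>k\<bar> \<le> int n \<Longrightarrow> \<bar>x k\<bar> \<le> int n"
    using x unfolding signed_perm_def by blast+
  txt \<open>\<open>f\<close> is nondecreasing on \<open>[1, n]\<close>, nonnegative at \<open>1\<close> and nonpositive at \<open>n\<close>.\<close>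
  define f where "f k = x (int k) - int k" for k :: nat
  have f_mono: "f j \<le> f k" if "1 \<le> j" "j \<le> k" "k \<le> n" for j k
    using that(2,3)
  proof (induction k rule: dec_induct)
    case (step m)
    then have "f j \<le> f m" "x (int m) < x (int m + 1)"
      using asc[of m] \<open>1 \<le> j\<close> by simp_all
    then show ?case
      by (simp add: f_def add.commute)
  qed simp
  have pos: "x a = a" if "1 \<le> a" "a \<le> int n" for a
  proof -
    define k where "k = nat a"
    have k: "a = int k" "1 \<le> k" "k \<le> n"
      unfolding k_def using that by (auto simp: le_nat_iff)
    have "0 \<le> f 1" using \<open>0 < x 1\<close> by (simp add: f_def)
    moreover have "f 1 \<le> f k" "f k \<le> f n" using f_mono k by simp_all
    moreover have "f n \<le> 0" using bounded[of "int n"] k by (simp add: f_def)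
    ultimately have "f k = 0" by linarith
    then show ?thesis using k(1) by (simp add: f_def)
  qed
  show ?thesis
  proof
    fix k
    have "(k = 0 \<or> int n < \<bar>k\<bar>) \<or> (1 \<le> k \<and> k \<le> int n) \<or> (1 \<le> - k \<and> - k \<le> int n)"
      by (auto split: abs_split)
    then consider "k = 0 \<or> int n < \<bar>k\<bar>" | "1 \<le> k" "k \<le> int n" | "1 \<le> - k" "- k \<le> int n"
      by blast
    then show "x k = id k"
    proof cases
      case 1
      then show ?thesis by (simp add: fixed)
    next
      case 2
      then show ?thesis by (simp add: pos)
    next
      case 3
      then show ?thesis using odd[of "- k"] pos[of "- k"] by simp
    qed
  qed
qed

lemma exists_word_double_length:
  assumes "signed_perm n x" "1 \<le> n"
  shows "\<exists>ws. set ws \<subseteq> gensB n \<and> prodw ws = x \<and> 2 * length ws = double_length n x"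
  using assms(1)
proof (induction "double_length n x" arbitrary: x rule: less_induct)
  case less
  show ?case
  proof (cases "x = id")
    case True
    then show ?thesis
      by (intro exI[of _ "[]"]) (simp add: prodw_Nil double_length_id)
  next
    case False
    have "\<exists>g \<in> gensB n. int (double_length n (x \<circ> g)) = int (double_length n x) - 2"
    proof (rule ccontr)
      assume no_descent: "\<not> ?thesis"
      have "0 < x 1"
        using no_descent tB_in_gensB double_length_comp_tB[OF less.prems assms(2)]
        by (auto split: if_splits)
      moreover have "x (int j) < x (int j + 1)" if "1 \<le> j" "j + 1 \<le> n" for j
        using no_descent sB_in_gensB[OF that] double_length_comp_sB[OF less.prems that]
        by (auto split: if_splits)
      ultimately have "x = id"
        using signed_perm_ascending_eq_id[OF less.prems] by blast
      with False show False ..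
    qed
    then obtain g where g: "g \<in> gensB n" "int (double_length n (x \<circ> g)) = int (double_length n x) - 2"
      by blast
    have "signed_perm n (x \<circ> g)"
      using signed_perm_comp signed_perm_gen g(1) less.prems assms(2) by blast
    then obtain ws where ws: "set ws \<subseteq> gensB n" "prodw ws = x \<circ> g" "2 * length ws = double_length n (x \<circ> g)"
      using less.hyps[of "x \<circ> g"] g(2) by force
    have "prodw (ws @ [g]) = x"
      using ws(2) gen_comp_self[OF g(1)] by (simp add: prodw_snoc comp_assoc)
    then show ?thesis
      using ws g by (intro exI[of _ "ws @ [g]"]) auto
  qed
qed

lemma lenB_eq_double_length:
  assumes "signed_perm n x" "1 \<le> n"
  shows "lenB n x = double_length n x div 2"
  unfolding lenB_def
proof (rule Least_equality)
  obtain ws where "set ws \<subseteq> gensB n" "prodw ws = x" "2 * length ws = double_length n x"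
    using exists_word_double_length[OF assms] by blast
  then show "\<exists>ws. length ws = double_length n x div 2 \<and> set ws \<subseteq> gensB n \<and> prodw ws = x"
    by (intro exI[of _ ws]) auto
next
  fix k assume "\<exists>ws. length ws = k \<and> set ws \<subseteq> gensB n \<and> prodw ws = x"
  then obtain ws where "length ws = k" "set ws \<subseteq> gensB n" "prodw ws = x"
    by blast
  then show "double_length n x div 2 \<le> k"
    using double_length_prodw_le[of ws n] assms(2) by auto
qed

lemma WB_imp_signed_perm: "x \<in> WB n \<Longrightarrow> 1 \<le> n \<Longrightarrow> signed_perm n x"
  unfolding WB_def using signed_perm_prodw by blast

lemma WB_comp_gen:
  assumes "x \<in> WB n" "g \<in> gensB n"
  shows "x \<circ> g \<in> WB n"
proof -
  obtain ws where "set ws \<subseteq> gensB n" "x = prodw ws"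
    using assms(1) unfolding WB_def by blast
  with assms(2) have "set (ws @ [g]) \<subseteq> gensB n" "x \<circ> g = prodw (ws @ [g])"
    by (simp_all add: prodw_snoc)
  then show ?thesis
    unfolding WB_def by blast
qed

lemma tB_comp_WB: "x \<in> WB n \<Longrightarrow> tB \<circ> x \<in> WB n"
  unfolding WB_def gensB_def by clarify (rule exI[of _ "tB # _"], auto simp: prodw_def)

lemma lenB_comp_sB_less_iff:
  assumes "x \<in> WB n" "1 \<le> j" "j + 1 \<le> n"
  shows "lenB n (x \<circ> sB j) < lenB n x \<longleftrightarrow> x (int j + 1) < x (int j)"
proof -
  have n: "1 \<le> n" using assms by simp
  have x: "signed_perm n x"
    using WB_imp_signed_perm assms(1) n by blast
  then have xs: "signed_perm n (x \<circ> sB j)"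
    using signed_perm_comp signed_perm_sB assms(2,3) by blast
  have "x (int j) \<noteq> x (int j + 1)"
    using signed_perm_neq(1)[OF x, of "int j" "int j + 1"] assms(2) by simp
  then consider "x (int j) < x (int j + 1)" "double_length n (x \<circ> sB j) = double_length n x + 2"
    | "x (int j + 1) < x (int j)" "double_length n x = double_length n (x \<circ> sB j) + 2"
    using double_length_comp_sB[OF x assms(2,3)] by (cases "x (int j) < x (int j + 1)") auto
  then show ?thesis
    unfolding lenB_eq_double_length[OF x n] lenB_eq_double_length[OF xs n]
    by cases auto
qed

lemma DB_iff:
  assumes "x \<in> WB n" "1 \<le> i" "i + 2 \<le> n"
  shows "x \<in> DB n i \<longleftrightarrow> (x (int i + 1) < x (int i) \<longleftrightarrow> \<not> x (int i + 2) < x (int i + 1))"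
proof -
  have "sB i \<noteq> sB (i + 1)"
  proof
    assume "sB i = sB (i + 1)"
    then have "sB i (int i) = sB (i + 1) (int i)" by simp
    with assms(2) show False by (simp add: sB_def)
  qed
  moreover have "RB n i x = (if x (int i + 1) < x (int i) then {sB i} else {})
                          \<union> (if x (int i + 2) < x (int i + 1) then {sB (i + 1)} else {})"
    using lenB_comp_sB_less_iff[OF assms(1,2)] lenB_comp_sB_less_iff[OF assms(1), of "i + 1"] assms
    by (auto simp: RB_def ac_simps)
  ultimately show ?thesis
    using assms(1) by (auto simp: DB_def)
qed

lemma tB_less_tB_iff: "a \<noteq> 0 \<Longrightarrow> b \<noteq> 0 \<Longrightarrow> a \<noteq> - b \<Longrightarrow> tB b < tB a \<longleftrightarrow> b < a"
  by (auto simp: tB_def)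

lemma tB_comp_DB_iff:
  assumes "x \<in> WB n" "1 \<le> i" "i + 2 \<le> n"
  shows "tB \<circ> x \<in> DB n i \<longleftrightarrow> x \<in> DB n i"
proof -
  have x: "signed_perm n x"
    using WB_imp_signed_perm assms by simp
  have x0: "x 0 = 0"
    using x by (simp add: signed_perm_def)
  have nonzero: "x (int i + k) \<noteq> 0" if "0 \<le> k" for k
    using signed_perm_neq(1)[OF x, of "int i + k" 0] x0 that assms(2) by simp
  have not_neg: "x (int i + k) \<noteq> - x (int i + l)" if "0 \<le> k" "0 \<le> l" "k \<noteq> l" for k l
    using signed_perm_neq(2)[OF x, of "int i + k" "int i + l"] that assms(2) by simp
  have "tB (x (int i + 1)) < tB (x (int i)) \<longleftrightarrow> x (int i + 1) < x (int i)"
    using nonzero[of 0] nonzero[of 1] not_neg[of 0 1] by (intro tB_less_tB_iff) simp_all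
  moreover have "tB (x (int i + 2)) < tB (x (int i + 1)) \<longleftrightarrow> x (int i + 2) < x (int i + 1)"
    using nonzero[of 1] nonzero[of 2] not_neg[of 1 2] by (intro tB_less_tB_iff) simp_all
  ultimately show ?thesis
    unfolding DB_iff[OF assms] DB_iff[OF tB_comp_WB[OF assms(1)] assms(2,3)] by simp
qed

definition star_candidates :: "nat \<Rightarrow> nat \<Rightarrow> (int \<Rightarrow> int) \<Rightarrow> (int \<Rightarrow> int) set" where
  "star_candidates n i x = {x \<circ> sB i, x \<circ> sB (i + 1)} \<inter> DB n i"

lemma gammaB_eqI: "star_candidates n i x = {y} \<Longrightarrow> gammaB n i x = y"
  unfolding gammaB_def star_candidates_def by auto

text \<open>If \<open>a, b, c\<close> are the values of \<open>x\<close> at \<open>i, i + 1, i + 2\<close>, then \<open>x s\<^sub>i\<close> and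
  \<open>x s\<^bsub>i+1\<^esub>\<close> show \<open>b, a, c\<close> and \<open>a, c, b\<close> there.\<close>

lemma three_point_descent_exchange:
  fixes a b c :: "'a::linorder"
  assumes "a \<noteq> b" "b \<noteq> c" "a \<noteq> c" "b < a \<longleftrightarrow> \<not> c < b"
  shows "(a < b \<longleftrightarrow> \<not> c < a) \<longleftrightarrow> \<not> (c < a \<longleftrightarrow> \<not> b < c)"
  using assms by (metis less_trans neq_iff)

lemma star_candidates_singleton:
  assumes x: "x \<in> DB n i" and i: "1 \<le> i" "i + 2 \<le> n"
  shows "\<exists>y. star_candidates n i x = {y}"
proof -
  have W: "x \<in> WB n"
    using x by (simp add: DB_def)
  have Ws: "x \<circ> sB i \<in> WB n" "x \<circ> sB (i + 1) \<in> WB n"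
    using WB_comp_gen[OF W] sB_in_gensB i by simp_all
  have sB_i: "sB i (int i) = int i + 1" "sB i (int i + 1) = int i" "sB i (int i + 2) = int i + 2"
    and sB_Suc_i: "sB (i + 1) (int i) = int i" "sB (i + 1) (int i + 1) = int i + 2"
      "sB (i + 1) (int i + 2) = int i + 1"
    using i by (auto simp: sB_def)
  have xP: "signed_perm n x"
    using WB_imp_signed_perm W i by simp
  have ne: "x (int i) \<noteq> x (int i + 1)" "x (int i + 1) \<noteq> x (int i + 2)" "x (int i) \<noteq> x (int i + 2)"
    using signed_perm_neq(1)[OF xP] i by simp_all
  have "x (int i + 1) < x (int i) \<longleftrightarrow> \<not> x (int i + 2) < x (int i + 1)"
    using x DB_iff[OF W i] by simp
  then have "(x (int i) < x (int i + 1) \<longleftrightarrow> \<not> x (int i + 2) < x (int i))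
      \<longleftrightarrow> \<not> (x (int i + 2) < x (int i) \<longleftrightarrow> \<not> x (int i + 1) < x (int i + 2))"
    by (rule three_point_descent_exchange[OF ne])
  then have "x \<circ> sB i \<in> DB n i \<longleftrightarrow> \<not> x \<circ> sB (i + 1) \<in> DB n i"
    unfolding DB_iff[OF Ws(1) i] DB_iff[OF Ws(2) i] by (simp only: comp_apply sB_i sB_Suc_i)
  moreover have "x \<circ> sB i \<noteq> x \<circ> sB (i + 1)"
    using ne(1) sB_i(1) sB_Suc_i(1) by (metis comp_apply)
  ultimately show ?thesis
    unfolding star_candidates_def by (cases "x \<circ> sB i \<in> DB n i") auto
qed

lemma star_candidates_tB_comp:
  assumes "x \<in> WB n" "1 \<le> i" "i + 2 \<le> n"
  shows "star_candidates n i (tB \<circ> x) = (\<circ>) tB ` star_candidates n i x"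
proof -
  have "tB \<circ> (x \<circ> s) \<in> DB n i \<longleftrightarrow> x \<circ> s \<in> DB n i" if "s \<in> {sB i, sB (i + 1)}" for s
    using that assms WB_comp_gen[OF assms(1)] sB_in_gensB tB_comp_DB_iff by auto
  then show ?thesis
    unfolding star_candidates_def by (auto simp: comp_assoc)
qed

theorem corollary2p13:
  fixes n i :: nat and x :: "int \<Rightarrow> int"
  assumes "x \<in> WB n" and "1 \<le> i" and "i \<le> n - 2"
  shows "(x \<in> DB n i \<longleftrightarrow> tB \<circ> x \<in> DB n i) \<and>
         (x \<in> DB n i \<longrightarrow> gammaB n i (tB \<circ> x) = tB \<circ> gammaB n i x)"
proof -
  have i: "1 \<le> i" "i + 2 \<le> n"
    using assms(2,3) by linarith+
  have "gammaB n i (tB \<circ> x) = tB \<circ> gammaB n i x" if D: "x \<in> DB n i"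
  proof -
    obtain y where y: "star_candidates n i x = {y}"
      using star_candidates_singleton[OF D i] by blast
    then have "star_candidates n i (tB \<circ> x) = {tB \<circ> y}"
      using star_candidates_tB_comp[OF assms(1) i] by simp
    then show ?thesis
      using gammaB_eqI y by metis
  qed
  then show ?thesis
    using tB_comp_DB_iff[OF assms(1) i] by blast
qed

end
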